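(* In the multilevel setting, assume (P1) and (P2). Then the multilevel iteration sequence $\{x^k\}$ is bounded.
   Context: Multilevel setting. For $i=0,\dots,N$ let $f_i:\mathbb R^n\to\mathbb R$ be convex and continuously differentiable with $L_{f_i}$-Lipschitz gradient and $g_i:\mathbb R^n\to(-\infty,+\infty]$ proper, lower semicontinuous and convex; $\phi_i=f_i+g_i$. Set $X_0^*=\mathbb R^n$ and $X_{i+1}^*=\arg\min_{x\in X_i^*}\phi_i(x)$. Let $\omega:\mathbb R^n\to\mathbb R$ be $\mu$-strongly convex, continuously differentiable with $L_\omega$-Lipschitz gradient, and $S(x)=T_0(x)=x-u\nabla\omega(x)$ with $u\in(0,\tfrac2{L_\omega+\mu}]$, a contraction with constant $r=\sqrt{1-\tfrac{2u\mu L_\omega}{\mu+L_\omega}}\in[0,1)$. For $i=1,\dots,N$ let $T_i(x)=\mathrm{prox}_{t_{i-1}g_{i-1}}(x-t_{i-1}\nabla f_{i-1}(x))$ with $t_{i-1}\in(0,1/L_{f_{i-1}}]$, where $\mathrm{prox}_g(x)=\arg\min_u\{g(u)+\frac12\|u-x\|^2\}$; these are nonexpansive and $\mathrm{Fix}(T_1)=X_1^*$, assumed nonempty. Given $x^0$ and weights $\alpha_k^{(0)},\dots,\alpha_k^{(N)}$, the multilevel iteration is $x^{k+1}=\sum_{i=0}^N\alpha_k^{(i)}T_i(x^k)$. (P1): $\alpha_k^{(i)}\ge0$, $\alpha_k^{(0)}<1$, and $\sum_{i=0}^N\alpha_k^{(i)}=1$ for all $k$. (P2): $\alpha_k^{(0)}\to0$,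 $\sum_k\alpha_k^{(0)}=\infty$, and $\delta^*:=\limsup_{k\to\infty}\frac1{\alpha_k^{(0)}}\sum_{i=2}^N\alpha_k^{(i)}\in[0,+\infty)$. *)

theory Defs
  imports "HOL-Analysis.Analysis"
begin

definition proper_fun :: "('a \<Rightarrow> ereal) \<Rightarrow> bool" where
  "proper_fun g \<longleftrightarrow> (\<forall>x. g x \<noteq> -\<infinity>) \<and> (\<exists>x. g x \<noteq> \<infinity>)"

definition lsc_fun :: "('a::topological_space \<Rightarrow> ereal) \<Rightarrow> bool" where
  "lsc_fun g \<longleftrightarrow> (\<forall>c::real. closed {x. g x \<le> ereal c})"

definition ereal_convex_fun :: "('a::real_vector \<Rightarrow> ereal) \<Rightarrow> bool" where
  "ereal_convex_fun g \<longleftrightarrow>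
     (\<forall>x y. \<forall>\<theta>::real. 0 \<le> \<theta> \<and> \<theta> \<le> 1 \<longrightarrow>
        g ((1 - \<theta>) *\<^sub>R x + \<theta> *\<^sub>R y) \<le> ereal (1 - \<theta>) * g x + ereal \<theta> * g y)"

definition prox :: "('a::real_normed_vector \<Rightarrow> ereal) \<Rightarrow> 'a \<Rightarrow> 'a" where
  "prox g x = (SOME p. \<forall>u. g p + ereal (1/2 * (norm (p - x))\<^sup>2) \<le> g u + ereal (1/2 * (norm (u - x))\<^sup>2))"

definition phi :: "(nat \<Rightarrow> 'a \<Rightarrow> real) \<Rightarrow> (nat \<Rightarrow> 'a \<Rightarrow> ereal) \<Rightarrow> nat \<Rightarrow> 'a \<Rightarrow> ereal" where
  "phi f g i x = ereal (f i x) + g i x"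

fun Xstar :: "(nat \<Rightarrow> 'a \<Rightarrow> real) \<Rightarrow> (nat \<Rightarrow> 'a \<Rightarrow> ereal) \<Rightarrow> nat \<Rightarrow> 'a set" where
  "Xstar f g 0 = UNIV"
| "Xstar f g (Suc i) = {x \<in> Xstar f g i. \<forall>y \<in> Xstar f g i. phi f g i x \<le> phi f g i y}"

definition Top :: "('a::real_normed_vector \<Rightarrow> 'a) \<Rightarrow> real \<Rightarrow> (nat \<Rightarrow> 'a \<Rightarrow> 'a) \<Rightarrow>
     (nat \<Rightarrow> 'a \<Rightarrow> ereal) \<Rightarrow> (nat \<Rightarrow> real) \<Rightarrow> nat \<Rightarrow> 'a \<Rightarrow> 'a" where
  "Top gw u gf g t i x =
     (if i = 0 then x - u *\<^sub>R gw x
      else prox (\<lambda>v. ereal (t (i - 1)) * g (i - 1) v) (x - t (i - 1) *\<^sub>R gf (i - 1) x))"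

end

theory Submission
  imports Defs
begin

text \<open>Fix a point p of X_1^* = Fix T_1 and write a_k^(i) for alpha_k^(i). The step T_0 = S is a
  contraction with constant r < 1, because strong convexity makes the gradient of
  omega - mu/2 |.|^2 cocoercive. Each T_i with i \<ge> 1 is a forward-backward step and hence
  nonexpansive: the gradient step by the cocoercivity of a Lipschitz gradient (Baillon-Haddad),
  the proximal map by its variational inequality. Comparing every T_i x^k with p gives
  |x^(k+1) - p| \<le> (1 - a_k^(0) (1 - r)) |x^k - p| + a_k^(0) |S p - p| + C (a_k^(2) + ... + a_k^(N)).
  Since delta^* < \<infinity>, the last sum is eventually at most B a_k^(0), so |x^(k+1) - p| is
  eventually a convex combination of |x^k - p| and (|S p - p| + C B) / (1 - r), and the distances
  stay bounded.\<close>

section \<open>Smooth convex functions and gradient steps\<close>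

lemma has_real_derivative_along_line:
  fixes f :: "'a::real_inner \<Rightarrow> real"
  assumes "(f has_derivative (\<lambda>h. G \<bullet> h)) (at (x + s *\<^sub>R v))"
  shows "((\<lambda>s. f (x + s *\<^sub>R v)) has_real_derivative G \<bullet> v) (at s)"
proof -
  have "((\<lambda>s. x + s *\<^sub>R v) has_derivative (\<lambda>s. s *\<^sub>R v)) (at s)"
    by (auto intro!: derivative_eq_intros)
  from has_derivative_compose[OF this assms]
  have "((\<lambda>s. f (x + s *\<^sub>R v)) has_derivative (\<lambda>r. G \<bullet> (r *\<^sub>R v))) (at s)"
    by (simp add: o_def)
  moreover have "(\<lambda>r. G \<bullet> (r *\<^sub>R v)) = (*) (G \<bullet> v)"
    by (auto simp: fun_eq_iff)
  ultimately show ?thesis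
    by (simp add: has_field_derivative_def)
qed

lemma directional_derivative_at_right:
  fixes f :: "'a::real_inner \<Rightarrow> real"
  assumes "(f has_derivative (\<lambda>h. G \<bullet> h)) (at x)"
  shows "((\<lambda>s. (f (x + s *\<^sub>R v) - f x) / s) \<longlongrightarrow> G \<bullet> v) (at_right 0)"
proof -
  have "((\<lambda>s. f (x + s *\<^sub>R v)) has_real_derivative G \<bullet> v) (at 0)"
    using assms by (intro has_real_derivative_along_line) simp
  then have "((\<lambda>s. (f (x + s *\<^sub>R v) - f x) / s) \<longlongrightarrow> G \<bullet> v) (at 0)"
    by (simp add: DERIV_def)
  then show ?thesis
    using tendsto_mono[OF at_le] by blast
qed

lemma lowerbound_at_right_0:
  fixes q :: "real \<Rightarrow> real"
  assumes "\<And>s. 0 < s \<Longrightarrow> s \<le> 1 \<Longrightarrow> a \<le> q s" and "(q \<longlongrightarrow> l) (at_right 0)"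
  shows "a \<le> l"
proof (rule tendsto_lowerbound[OF assms(2)])
  show "\<forall>\<^sub>F s in at_right 0. a \<le> q s"
    using eventually_at_right_real[of 0 1] by (rule eventually_mono) (use assms(1) in auto)
qed simp

lemma convex_on_gradient_inequality:
  fixes f :: "'a::real_inner \<Rightarrow> real"
  assumes convex: "convex_on UNIV f" and deriv: "(f has_derivative (\<lambda>h. G \<bullet> h)) (at x)"
  shows "f x + G \<bullet> (y - x) \<le> f y"
proof -
  define h where "h s = f (x + s *\<^sub>R (y - x))" for s
  have "convex_on UNIV h"
  proof (rule convex_onI)
    fix \<theta> a b :: real assume "0 < \<theta>" "\<theta> < 1"
    have "x + ((1 - \<theta>) *\<^sub>R a + \<theta> *\<^sub>R b) *\<^sub>R (y - x)
        = (1 - \<theta>) *\<^sub>R (x + a *\<^sub>R (y - x)) + \<theta> *\<^sub>R (x + b *\<^sub>R (y - x))"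
      by (simp add: algebra_simps)
    then show "h ((1 - \<theta>) *\<^sub>R a + \<theta> *\<^sub>R b) \<le> (1 - \<theta>) * h a + \<theta> * h b"
      unfolding h_def using convex_onD[OF convex, of \<theta>] \<open>0 < \<theta>\<close> \<open>\<theta> < 1\<close> by simp
  qed simp
  moreover have "(h has_real_derivative G \<bullet> (y - x)) (at 0)"
    unfolding h_def using deriv by (intro has_real_derivative_along_line) simp
  ultimately have "G \<bullet> (y - x) * (1 - 0) \<le> h 1 - h 0"
    by (intro convex_on_imp_above_tangent) auto
  then show ?thesis
    by (simp add: h_def)
qed

lemma lipschitz_gradient_descent_lemma:
  fixes f :: "'a::real_inner \<Rightarrow> real"
  assumes deriv: "\<And>y. (f has_derivative (\<lambda>h. G y \<bullet> h)) (at y)"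
    and lip: "lipschitz_on L UNIV G"
  shows "f y \<le> f x + G x \<bullet> (y - x) + L / 2 * (norm (y - x))\<^sup>2"
proof -
  define v where "v = y - x"
  define h where "h s = f (x + s *\<^sub>R v) - s * (G x \<bullet> v) - L * s\<^sup>2 / 2 * (norm v)\<^sup>2" for s
  have "h 1 \<le> h 0"
  proof (rule DERIV_nonpos_imp_nonincreasing[of 0 1 h])
    fix s :: real assume s: "0 \<le> s" "s \<le> 1"
    have line: "((\<lambda>s. f (x + s *\<^sub>R v)) has_real_derivative G (x + s *\<^sub>R v) \<bullet> v) (at s)"
      using deriv by (rule has_real_derivative_along_line)
    have "(h has_real_derivative G (x + s *\<^sub>R v) \<bullet> v - G x \<bullet> v - L * s * (norm v)\<^sup>2) (at s)"
      unfolding h_def by (rule derivative_eq_intros line refl | simp)+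
    moreover have "(G (x + s *\<^sub>R v) - G x) \<bullet> v \<le> L * s * (norm v)\<^sup>2"
    proof -
      have "(G (x + s *\<^sub>R v) - G x) \<bullet> v \<le> norm (G (x + s *\<^sub>R v) - G x) * norm v"
        by (rule norm_cauchy_schwarz)
      also have "\<dots> \<le> L * norm (s *\<^sub>R v) * norm v"
        using lipschitz_onD[OF lip, of "x + s *\<^sub>R v" x] by (simp add: dist_norm mult_right_mono)
      also have "\<dots> = L * s * (norm v)\<^sup>2"
        using s by (simp add: power2_eq_square)
      finally show ?thesis .
    qed
    ultimately show "\<exists>y. (h has_real_derivative y) (at s) \<and> y \<le> 0"
      by (intro exI[of _ "G (x + s *\<^sub>R v) \<bullet> v - G x \<bullet> v - L * s * (norm v)\<^sup>2"])
        (simp add: inner_diff_left)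
  qed simp
  then show ?thesis
    unfolding h_def v_def by (simp add: algebra_simps)
qed

lemma convex_quadratic_upper_bound_gradient_gap:
  fixes f :: "'a::real_inner \<Rightarrow> real"
  assumes convex: "convex_on UNIV f" and deriv: "\<And>y. (f has_derivative (\<lambda>h. G y \<bullet> h)) (at y)"
    and upper: "\<And>x y. f y \<le> f x + G x \<bullet> (y - x) + L / 2 * (norm (y - x))\<^sup>2" and L: "L > 0"
  shows "f x + G x \<bullet> (y - x) + 1 / (2 * L) * (norm (G y - G x))\<^sup>2 \<le> f y"
proof -
  define \<Delta> where "\<Delta> = G y - G x"
  \<comment> \<open>z is a gradient step from y for the convex function f - G x \<bullet> _, which is minimal at x.\<close>
  define z where "z = y - (1 / L) *\<^sub>R \<Delta>"
  define c where "c = (G x \<bullet> \<Delta>) / L"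
  define q where "q = (norm \<Delta>)\<^sup>2 / L"
  have "f x + G x \<bullet> (z - x) \<le> f z"
    by (rule convex_on_gradient_inequality[OF convex deriv])
  moreover have "f z \<le> f y + G y \<bullet> (z - y) + L / 2 * (norm (z - y))\<^sup>2"
    by (rule upper)
  moreover have "G x \<bullet> (z - x) = G x \<bullet> (y - x) - c"
    unfolding z_def c_def by (simp add: inner_diff_right)
  moreover have "G y \<bullet> (z - y) = - (c + q)"
  proof -
    have "G y \<bullet> \<Delta> = G x \<bullet> \<Delta> + (norm \<Delta>)\<^sup>2"
      unfolding \<Delta>_def by (simp add: inner_diff_left power2_norm_eq_inner)
    then show ?thesis
      unfolding z_def c_def q_def by (simp add: inner_diff_right add_divide_distrib)
  qed
  moreover have "L / 2 * (norm (z - y))\<^sup>2 = q / 2"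
    unfolding z_def q_def using L by (simp add: power_divide power2_eq_square)
  moreover have "1 / (2 * L) * (norm \<Delta>)\<^sup>2 = q / 2"
    unfolding q_def by simp
  ultimately show ?thesis
    unfolding \<Delta>_def by linarith
qed

lemma convex_quadratic_upper_bound_cocoercive:
  fixes f :: "'a::real_inner \<Rightarrow> real"
  assumes convex: "convex_on UNIV f" and deriv: "\<And>y. (f has_derivative (\<lambda>h. G y \<bullet> h)) (at y)"
    and upper: "\<And>x y. f y \<le> f x + G x \<bullet> (y - x) + L / 2 * (norm (y - x))\<^sup>2" and L: "L \<ge> 0"
  shows "(norm (G x - G y))\<^sup>2 \<le> L * ((G x - G y) \<bullet> (x - y))"
proof -
  \<comment> \<open>Every L' > L is a positive constant in the upper bound; this also covers the case L = 0.\<close>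
  have pos: "(norm (G x - G y))\<^sup>2 \<le> L' * ((G x - G y) \<bullet> (x - y))" if L': "L' > L" for L'
  proof -
    have upper': "f b \<le> f a + G a \<bullet> (b - a) + L' / 2 * (norm (b - a))\<^sup>2" for a b
      using upper[where x = a and y = b] L' mult_right_mono[of L L' "(norm (b - a))\<^sup>2"] by simp
    have "f x + G x \<bullet> (y - x) + 1 / (2 * L') * (norm (G y - G x))\<^sup>2 \<le> f y"
      and "f y + G y \<bullet> (x - y) + 1 / (2 * L') * (norm (G x - G y))\<^sup>2 \<le> f x"
      using L L' by (intro convex_quadratic_upper_bound_gradient_gap[OF convex deriv upper']; simp)+
    moreover have "G x \<bullet> (y - x) + G y \<bullet> (x - y) = - ((G x - G y) \<bullet> (x - y))"
      by (simp add: inner_diff_left inner_diff_right algebra_simps)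
    ultimately have "1 / L' * (norm (G x - G y))\<^sup>2 \<le> (G x - G y) \<bullet> (x - y)"
      by (simp add: norm_minus_commute algebra_simps)
    then show ?thesis
      using L L' by (simp add: field_simps)
  qed
  show ?thesis
  proof (rule lowerbound_at_right_0)
    show "((\<lambda>e. (L + e) * ((G x - G y) \<bullet> (x - y))) \<longlongrightarrow> L * ((G x - G y) \<bullet> (x - y))) (at_right 0)"
      by (auto intro!: tendsto_eq_intros)
  qed (use pos in simp)
qed

lemma convex_gradient_monotone:
  fixes f :: "'a::real_inner \<Rightarrow> real"
  assumes convex: "convex_on UNIV f" and deriv: "\<And>y. (f has_derivative (\<lambda>h. G y \<bullet> h)) (at y)"
  shows "0 \<le> (G x - G y) \<bullet> (x - y)"
proof -
  have "f x + G x \<bullet> (y - x) \<le> f y" and "f y + G y \<bullet> (x - y) \<le> f x"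
    by (rule convex_on_gradient_inequality[OF convex deriv])+
  moreover have "G x \<bullet> (y - x) + G y \<bullet> (x - y) = - ((G x - G y) \<bullet> (x - y))"
    by (simp add: inner_diff_left inner_diff_right algebra_simps)
  ultimately show ?thesis
    by linarith
qed

lemma norm_diff_scaleR_squared:
  fixes a d :: "'a::real_inner"
  shows "(norm (a - t *\<^sub>R d))\<^sup>2 = (norm a)\<^sup>2 - 2 * t * (d \<bullet> a) + t\<^sup>2 * (norm d)\<^sup>2"
proof -
  have "(norm (a - t *\<^sub>R d))\<^sup>2 = (a - t *\<^sub>R d) \<bullet> (a - t *\<^sub>R d)"
    by (simp add: power2_norm_eq_inner)
  also have "\<dots> = a \<bullet> a - 2 * t * (d \<bullet> a) + t\<^sup>2 * (d \<bullet> d)"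
    by (simp add: inner_diff_left inner_diff_right inner_commute[of a d] power2_eq_square right_diff_distrib)
  finally show ?thesis
    by (simp add: power2_norm_eq_inner)
qed

lemma gradient_step_nonexpansive:
  fixes f :: "'a::real_inner \<Rightarrow> real"
  assumes convex: "convex_on UNIV f" and deriv: "\<And>y. (f has_derivative (\<lambda>h. G y \<bullet> h)) (at y)"
    and lip: "lipschitz_on L UNIV G" and t: "0 < t" "t * L \<le> 1"
  shows "norm ((x - t *\<^sub>R G x) - (y - t *\<^sub>R G y)) \<le> norm (x - y)"
proof -
  define a where "a = x - y"
  define d where "d = G x - G y"
  have cocoercive: "(norm d)\<^sup>2 \<le> L * (d \<bullet> a)"
    unfolding a_def d_def
    by (rule convex_quadratic_upper_bound_cocoercive[OF convex deriv _ lipschitz_on_nonneg[OF lip]])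
      (rule lipschitz_gradient_descent_lemma[OF deriv lip])
  have monotone: "0 \<le> d \<bullet> a"
    unfolding a_def d_def by (rule convex_gradient_monotone[OF convex deriv])
  have "t\<^sup>2 * (norm d)\<^sup>2 \<le> t\<^sup>2 * (L * (d \<bullet> a))"
    using cocoercive by (rule mult_left_mono) simp
  also have "\<dots> = t * ((t * L) * (d \<bullet> a))"
    by (simp add: power2_eq_square)
  also have "\<dots> \<le> t * (1 * (d \<bullet> a))"
    using t monotone by (intro mult_left_mono mult_right_mono) simp_all
  finally have "t\<^sup>2 * (norm d)\<^sup>2 \<le> t * (d \<bullet> a)"
    by simp
  moreover have "0 \<le> t * (d \<bullet> a)"
    using t monotone by simp
  ultimately have "(norm (a - t *\<^sub>R d))\<^sup>2 \<le> (norm a)\<^sup>2"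
    unfolding norm_diff_scaleR_squared by linarith
  then have "norm (a - t *\<^sub>R d) \<le> norm a"
    by (rule power2_le_imp_le) simp
  moreover have "(x - t *\<^sub>R G x) - (y - t *\<^sub>R G y) = a - t *\<^sub>R d"
    unfolding a_def d_def by (simp add: algebra_simps)
  ultimately show ?thesis
    unfolding a_def by metis
qed

lemma diff_sq_norm_has_derivative:
  fixes \<omega> :: "'a::real_inner \<Rightarrow> real"
  assumes "(\<omega> has_derivative (\<lambda>h. g\<omega> y \<bullet> h)) (at y)"
  shows "((\<lambda>y. \<omega> y - \<mu> / 2 * (norm y)\<^sup>2) has_derivative (\<lambda>h. (g\<omega> y - \<mu> *\<^sub>R y) \<bullet> h)) (at y)"
proof -
  have "((\<lambda>y. \<omega> y - \<mu> / 2 * (y \<bullet> y)) has_derivative (\<lambda>h. g\<omega> y \<bullet> h - \<mu> / 2 * (y \<bullet> h + h \<bullet> y))) (at y)"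
    by (rule derivative_eq_intros assms refl)+
  moreover have "(\<lambda>h. g\<omega> y \<bullet> h - \<mu> / 2 * (y \<bullet> h + h \<bullet> y)) = (\<lambda>h. (g\<omega> y - \<mu> *\<^sub>R y) \<bullet> h)"
    by (auto simp: fun_eq_iff inner_diff_left inner_diff_right inner_commute)
  ultimately show ?thesis
    by (simp add: power2_norm_eq_inner)
qed

lemma diff_sq_norm_upper_bound:
  fixes \<omega> :: "'a::real_inner \<Rightarrow> real"
  assumes deriv: "\<And>y. (\<omega> has_derivative (\<lambda>h. g\<omega> y \<bullet> h)) (at y)"
    and lip: "lipschitz_on L UNIV g\<omega>"
  shows "\<omega> y - \<mu> / 2 * (norm y)\<^sup>2
    \<le> \<omega> x - \<mu> / 2 * (norm x)\<^sup>2 + (g\<omega> x - \<mu> *\<^sub>R x) \<bullet> (y - x) + (L - \<mu>) / 2 * (norm (y - x))\<^sup>2"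
proof -
  have "\<omega> y \<le> \<omega> x + g\<omega> x \<bullet> (y - x) + L / 2 * (norm (y - x))\<^sup>2"
    by (rule lipschitz_gradient_descent_lemma[OF deriv lip])
  moreover have "\<mu> / 2 * (norm (y - x))\<^sup>2 = \<mu> / 2 * (norm y)\<^sup>2 - \<mu> * (x \<bullet> y) + \<mu> / 2 * (norm x)\<^sup>2"
    by (simp add: power2_norm_eq_inner inner_diff_left inner_diff_right inner_commute algebra_simps)
  moreover have "(g\<omega> x - \<mu> *\<^sub>R x) \<bullet> (y - x) = g\<omega> x \<bullet> (y - x) - \<mu> * (x \<bullet> y) + \<mu> * (norm x)\<^sup>2"
    by (simp add: inner_diff_left inner_diff_right power2_norm_eq_inner)
  moreover have "(L - \<mu>) / 2 * (norm (y - x))\<^sup>2 = L / 2 * (norm (y - x))\<^sup>2 - \<mu> / 2 * (norm (y - x))\<^sup>2"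
    by (simp add: left_diff_distrib diff_divide_distrib)
  ultimately show ?thesis
    by linarith
qed

lemma strong_convexity_le_lipschitz:
  fixes \<omega> :: "'a::euclidean_space \<Rightarrow> real"
  assumes strong: "convex_on UNIV (\<lambda>y. \<omega> y - \<mu> / 2 * (norm y)\<^sup>2)"
    and deriv: "\<And>y. (\<omega> has_derivative (\<lambda>h. g\<omega> y \<bullet> h)) (at y)"
    and lip: "lipschitz_on L UNIV g\<omega>"
  shows "\<mu> \<le> L"
proof -
  obtain b :: 'a where "norm b = 1"
    using norm_Basis nonempty_Basis by blast
  let ?\<psi> = "\<lambda>y. \<omega> y - \<mu> / 2 * (norm y)\<^sup>2"
  have "?\<psi> 0 + (g\<omega> 0 - \<mu> *\<^sub>R 0) \<bullet> (b - 0) \<le> ?\<psi> b"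
    by (rule convex_on_gradient_inequality[OF strong diff_sq_norm_has_derivative[OF deriv]])
  moreover have "?\<psi> b \<le> ?\<psi> 0 + (g\<omega> 0 - \<mu> *\<^sub>R 0) \<bullet> (b - 0) + (L - \<mu>) / 2 * (norm (b - 0))\<^sup>2"
    by (rule diff_sq_norm_upper_bound[OF deriv lip])
  ultimately have "0 \<le> (L - \<mu>) / 2 * (norm (b - 0))\<^sup>2"
    by linarith
  then show ?thesis
    using \<open>norm b = 1\<close> by simp
qed

lemma strongly_convex_gradient_cocoercive:
  fixes \<omega> :: "'a::euclidean_space \<Rightarrow> real"
  assumes strong: "convex_on UNIV (\<lambda>y. \<omega> y - \<mu> / 2 * (norm y)\<^sup>2)"
    and deriv: "\<And>y. (\<omega> has_derivative (\<lambda>h. g\<omega> y \<bullet> h)) (at y)"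
    and lip: "lipschitz_on L UNIV g\<omega>"
  shows "(norm (g\<omega> x - g\<omega> y))\<^sup>2 + L * \<mu> * (norm (x - y))\<^sup>2 \<le> (L + \<mu>) * ((g\<omega> x - g\<omega> y) \<bullet> (x - y))"
proof -
  define a where "a = x - y"
  define \<Delta> where "\<Delta> = g\<omega> x - g\<omega> y"
  define G where "G y = g\<omega> y - \<mu> *\<^sub>R y" for y
  have "((\<lambda>y. \<omega> y - \<mu> / 2 * (norm y)\<^sup>2) has_derivative (\<lambda>h. G y \<bullet> h)) (at y)" for y
    unfolding G_def by (rule diff_sq_norm_has_derivative[OF deriv])
  moreover have "\<omega> y - \<mu> / 2 * (norm y)\<^sup>2 \<le> \<omega> x - \<mu> / 2 * (norm x)\<^sup>2 + G x \<bullet> (y - x) + (L - \<mu>) / 2 * (norm (y - x))\<^sup>2"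
    for x y
    unfolding G_def by (rule diff_sq_norm_upper_bound[OF deriv lip])
  ultimately have "(norm (G x - G y))\<^sup>2 \<le> (L - \<mu>) * ((G x - G y) \<bullet> (x - y))"
    using strong_convexity_le_lipschitz[OF strong deriv lip]
    by (intro convex_quadratic_upper_bound_cocoercive[OF strong]) simp_all
  then have "(norm ((g\<omega> x - \<mu> *\<^sub>R x) - (g\<omega> y - \<mu> *\<^sub>R y)))\<^sup>2
      \<le> (L - \<mu>) * (((g\<omega> x - \<mu> *\<^sub>R x) - (g\<omega> y - \<mu> *\<^sub>R y)) \<bullet> (x - y))"
    unfolding G_def .
  moreover have "(g\<omega> x - \<mu> *\<^sub>R x) - (g\<omega> y - \<mu> *\<^sub>R y) = \<Delta> - \<mu> *\<^sub>R a"
    unfolding a_def \<Delta>_def by (simp add: algebra_simps)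
  ultimately have cocoercive: "(norm (\<Delta> - \<mu> *\<^sub>R a))\<^sup>2 \<le> (L - \<mu>) * ((\<Delta> - \<mu> *\<^sub>R a) \<bullet> a)"
    unfolding a_def by simp
  have "(norm (\<Delta> - \<mu> *\<^sub>R a))\<^sup>2 = (norm \<Delta>)\<^sup>2 - 2 * \<mu> * (\<Delta> \<bullet> a) + \<mu>\<^sup>2 * (norm a)\<^sup>2"
    by (simp add: norm_diff_scaleR_squared inner_commute)
  moreover have "(\<Delta> - \<mu> *\<^sub>R a) \<bullet> a = \<Delta> \<bullet> a - \<mu> * (norm a)\<^sup>2"
    by (simp add: inner_diff_left power2_norm_eq_inner)
  ultimately have "(norm \<Delta>)\<^sup>2 - 2 * \<mu> * (\<Delta> \<bullet> a) + \<mu>\<^sup>2 * (norm a)\<^sup>2 \<le> (L - \<mu>) * (\<Delta> \<bullet> a - \<mu> * (norm a)\<^sup>2)"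
    using cocoercive by simp
  then have "(norm \<Delta>)\<^sup>2 + L * \<mu> * (norm a)\<^sup>2 \<le> (L + \<mu>) * (\<Delta> \<bullet> a)"
    by (simp add: algebra_simps power2_eq_square)
  then show ?thesis
    unfolding a_def \<Delta>_def .
qed

lemma strongly_convex_gradient_step_contraction:
  fixes \<omega> :: "'a::euclidean_space \<Rightarrow> real"
  assumes mu: "\<mu> > 0"
    and strong: "convex_on UNIV (\<lambda>y. \<omega> y - \<mu> / 2 * (norm y)\<^sup>2)"
    and deriv: "\<And>y. (\<omega> has_derivative (\<lambda>h. g\<omega> y \<bullet> h)) (at y)"
    and lip: "lipschitz_on L UNIV g\<omega>"
    and u: "0 < u" "u \<le> 2 / (L + \<mu>)"
  defines "r \<equiv> sqrt (1 - 2 * u * \<mu> * L / (\<mu> + L))"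
  shows "0 \<le> r" and "r < 1"
    and "norm ((x - u *\<^sub>R g\<omega> x) - (y - u *\<^sub>R g\<omega> y)) \<le> r * norm (x - y)"
proof -
  define \<rho> where "\<rho> = 1 - 2 * u * \<mu> * L / (\<mu> + L)"
  have L: "\<mu> \<le> L"
    by (rule strong_convexity_le_lipschitz[OF strong deriv lip])
  have s: "\<mu> + L > 0"
    using mu L by simp
  have us: "u * (\<mu> + L) \<le> 2"
    using u s by (simp add: field_simps)
  have "(2 * u * \<mu> * L) * (\<mu> + L) = (u * (\<mu> + L)) * (2 * \<mu> * L)"
    by simp
  also have "\<dots> \<le> 2 * (2 * \<mu> * L)"
    using us mu L by (intro mult_right_mono) simp_all
  also have "\<dots> \<le> (\<mu> + L) * (\<mu> + L)"
    using sum_squares_ge_zero[of "L - \<mu>" 0] by (simp add: algebra_simps power2_eq_square)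
  finally have "2 * u * \<mu> * L / (\<mu> + L) \<le> 1"
    using s by (simp add: divide_le_eq)
  then show "0 \<le> r"
    unfolding r_def by simp
  have "0 < 2 * u * \<mu> * L / (\<mu> + L)"
    using u mu L s by simp
  then show "r < 1"
    unfolding r_def by simp
  define a where "a = x - y"
  define \<Delta> where "\<Delta> = g\<omega> x - g\<omega> y"
  have cocoercive: "(norm \<Delta>)\<^sup>2 + L * \<mu> * (norm a)\<^sup>2 \<le> (\<mu> + L) * (\<Delta> \<bullet> a)"
    using strongly_convex_gradient_cocoercive[OF strong deriv lip, of x y]
    unfolding a_def \<Delta>_def by (simp add: add.commute)
  have "(\<mu> + L) * (norm (a - u *\<^sub>R \<Delta>))\<^sup>2
      = (\<mu> + L) * (norm a)\<^sup>2 - 2 * u * ((\<mu> + L) * (\<Delta> \<bullet> a)) + u * (u * (\<mu> + L)) * (norm \<Delta>)\<^sup>2"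
    unfolding norm_diff_scaleR_squared by (simp add: algebra_simps power2_eq_square)
  also have "\<dots> \<le> (\<mu> + L) * (norm a)\<^sup>2 - 2 * u * ((norm \<Delta>)\<^sup>2 + L * \<mu> * (norm a)\<^sup>2) + u * 2 * (norm \<Delta>)\<^sup>2"
  proof -
    have "2 * u * ((norm \<Delta>)\<^sup>2 + L * \<mu> * (norm a)\<^sup>2) \<le> 2 * u * ((\<mu> + L) * (\<Delta> \<bullet> a))"
      using cocoercive u by simp
    moreover have "u * (u * (\<mu> + L)) * (norm \<Delta>)\<^sup>2 \<le> u * 2 * (norm \<Delta>)\<^sup>2"
      using us u by (intro mult_right_mono mult_left_mono) simp_all
    ultimately show ?thesis
      by linarith
  qed
  also have "\<dots> = (\<mu> + L) * (\<rho> * (norm a)\<^sup>2)"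
    unfolding \<rho>_def using s by (simp add: field_simps)
  finally have "(norm (a - u *\<^sub>R \<Delta>))\<^sup>2 \<le> (r * norm a)\<^sup>2"
    using s \<open>0 \<le> r\<close> unfolding r_def \<rho>_def by (simp add: power_mult_distrib)
  then have "norm (a - u *\<^sub>R \<Delta>) \<le> r * norm a"
    by (rule power2_le_imp_le) (simp add: \<open>0 \<le> r\<close>)
  moreover have "(x - u *\<^sub>R g\<omega> x) - (y - u *\<^sub>R g\<omega> y) = a - u *\<^sub>R \<Delta>"
    unfolding a_def \<Delta>_def by (simp add: algebra_simps)
  ultimately show "norm ((x - u *\<^sub>R g\<omega> x) - (y - u *\<^sub>R g\<omega> y)) \<le> r * norm (x - y)"
    unfolding a_def by metis
qed

section \<open>Proximal maps\<close>

text \<open>A proper lower semicontinuous convex function, given by its effective domain D and its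
  finite values on D.\<close>

locale lsc_convex_function =
  fixes D :: "'a::euclidean_space set" and \<gamma> :: "'a \<Rightarrow> real"
  assumes domain_nonempty: "D \<noteq> {}"
    and convex: "convex_on D \<gamma>"
    and sublevel_closed: "\<And>c. closed {v \<in> D. \<gamma> v \<le> c}"
begin

definition prox_objective :: "'a \<Rightarrow> 'a \<Rightarrow> real" where
  "prox_objective x u = \<gamma> u + 1/2 * (norm (u - x))\<^sup>2"

lemma convex_combination:
  assumes "x \<in> D" "y \<in> D" "0 \<le> \<theta>" "\<theta> \<le> 1"
  shows "(1 - \<theta>) *\<^sub>R x + \<theta> *\<^sub>R y \<in> D"
    and "\<gamma> ((1 - \<theta>) *\<^sub>R x + \<theta> *\<^sub>R y) \<le> (1 - \<theta>) * \<gamma> x + \<theta> * \<gamma> y"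
  using convexD[OF convex_on_imp_convex[OF convex]] convex_onD[OF convex] assms by auto

lemma cone_minorant: "\<exists>x0\<in>D. \<exists>c\<ge>0. \<forall>u\<in>D. \<gamma> x0 - 1 - c * norm (u - x0) \<le> \<gamma> u"
proof -
  obtain x0 where x0: "x0 \<in> D"
    using domain_nonempty by blast
  have "open (- {v \<in> D. \<gamma> v \<le> \<gamma> x0 - 1})"
    using sublevel_closed by (simp add: open_Compl)
  moreover have "x0 \<in> - {v \<in> D. \<gamma> v \<le> \<gamma> x0 - 1}"
    by simp
  ultimately obtain r where r: "r > 0" and ball: "ball x0 r \<subseteq> - {v \<in> D. \<gamma> v \<le> \<gamma> x0 - 1}"
    using open_contains_ball by blast
  have near: "\<gamma> x0 - 1 < \<gamma> v" if "v \<in> D" "norm (v - x0) < r" for v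
    using ball that by (auto simp: subset_iff dist_norm norm_minus_commute)
  have "\<gamma> x0 - 1 - (2 / r) * norm (u - x0) \<le> \<gamma> u" if u: "u \<in> D" for u
  proof (cases "norm (u - x0) < r")
    case True
    moreover have "0 \<le> (2 / r) * norm (u - x0)"
      using r by simp
    ultimately show ?thesis
      using near[OF u] by linarith
  next
    case False
    \<comment> \<open>The point z at distance r/2 from x0 towards u has \<gamma> z > \<gamma> x0 - 1; convexity along
      the segment turns this into the linear bound at u.\<close>
    then have "norm (u - x0) > 0"
      using r by (cases "u = x0") auto
    define \<theta> where "\<theta> = r / (2 * norm (u - x0))"
    have \<theta>: "0 < \<theta>" "\<theta> \<le> 1"
      unfolding \<theta>_def using r False \<open>norm (u - x0) > 0\<close> by (simp_all add: field_simps)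
    define z where "z = (1 - \<theta>) *\<^sub>R x0 + \<theta> *\<^sub>R u"
    have "norm (z - x0) = r / 2"
    proof -
      have "z - x0 = \<theta> *\<^sub>R (u - x0)"
        unfolding z_def by (simp add: algebra_simps)
      then show ?thesis
        unfolding \<theta>_def using r \<open>norm (u - x0) > 0\<close> by simp
    qed
    then have "\<gamma> x0 - 1 < \<gamma> z"
      using near convex_combination(1)[OF x0 u] \<theta> r unfolding z_def by simp
    also have "\<gamma> z \<le> (1 - \<theta>) * \<gamma> x0 + \<theta> * \<gamma> u"
      unfolding z_def using convex_combination(2)[OF x0 u] \<theta> by simp
    finally have "\<gamma> x0 - 1 / \<theta> < \<gamma> u"
      using \<theta> by (simp add: field_simps)
    moreover have "1 / \<theta> = (2 / r) * norm (u - x0)"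
      unfolding \<theta>_def using r False by simp
    ultimately show ?thesis
      by simp
  qed
  then show ?thesis
    using x0 r by (intro bexI[OF _ x0] exI[of _ "2 / r"]) auto
qed

lemma prox_objective_sublevel_closed: "closed {u \<in> D. prox_objective x u \<le> c}"
proof (subst closed_sequential_limits, intro allI impI, elim conjE)
  fix s l assume s: "\<forall>n. s n \<in> {u \<in> D. prox_objective x u \<le> c}" and l: "s \<longlonglongrightarrow> l"
  define q where "q v = 1/2 * (norm (v - x))\<^sup>2" for v
  have q: "(\<lambda>n. q (s n)) \<longlonglongrightarrow> q l"
    unfolding q_def by (intro tendsto_intros l)
  have approx: "l \<in> D \<and> \<gamma> l \<le> c - q l + e" if e: "e > 0" for e
  proof -
    have "\<forall>\<^sub>F n in sequentially. q l - e < q (s n)"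
      using order_tendstoD(1)[OF q] e by simp
    then have "\<forall>\<^sub>F n in sequentially. s n \<in> {v \<in> D. \<gamma> v \<le> c - q l + e}"
    proof (rule eventually_mono)
      fix n assume "q l - e < q (s n)"
      moreover have "s n \<in> D" "\<gamma> (s n) + q (s n) \<le> c"
        using s unfolding prox_objective_def q_def by auto
      ultimately show "s n \<in> {v \<in> D. \<gamma> v \<le> c - q l + e}"
        by simp
    qed
    from Lim_in_closed_set[OF sublevel_closed[of "c - q l + e"] this _ l] show ?thesis
      by simp
  qed
  have "\<gamma> l \<le> c - q l"
  proof (rule field_le_epsilon)
    fix e :: real assume "0 < e"
    then show "\<gamma> l \<le> c - q l + e"
      using approx by blast
  qed
  with approx[of 1] show "l \<in> {u \<in> D. prox_objective x u \<le> c}"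
    unfolding prox_objective_def q_def by simp
qed

lemma prox_objective_coercive:
  obtains c K where "c \<ge> 0"
    and "\<And>u. u \<in> D \<Longrightarrow> K - c * norm (u - x) + 1/2 * (norm (u - x))\<^sup>2 \<le> prox_objective x u"
proof -
  obtain x0 c where x0: "x0 \<in> D" and c: "c \<ge> 0"
    and minorant: "\<And>u. u \<in> D \<Longrightarrow> \<gamma> x0 - 1 - c * norm (u - x0) \<le> \<gamma> u"
    using cone_minorant by blast
  have coercive: "(\<gamma> x0 - 1 - c * norm (x - x0)) - c * norm (u - x) + 1/2 * (norm (u - x))\<^sup>2
      \<le> prox_objective x u" if u: "u \<in> D" for u
  proof -
    have "norm (u - x0) \<le> norm (u - x) + norm (x - x0)"
      using norm_triangle_ineq[of "u - x" "x - x0"] by simp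
    then have "c * norm (u - x0) \<le> c * (norm (u - x) + norm (x - x0))"
      by (rule mult_left_mono[OF _ c])
    then show ?thesis
      using minorant[OF u] unfolding prox_objective_def by (simp add: algebra_simps)
  qed
  show thesis
    using that[where K = "\<gamma> x0 - 1 - c * norm (x - x0)", OF c coercive] .
qed

lemma prox_objective_bdd_below: "bdd_below (prox_objective x ` D)"
proof -
  obtain c K where c: "c \<ge> 0"
    and coercive: "\<And>u. u \<in> D \<Longrightarrow> K - c * norm (u - x) + 1/2 * (norm (u - x))\<^sup>2 \<le> prox_objective x u"
    using prox_objective_coercive[where x = x] by metis
  have "K - c\<^sup>2 / 2 \<le> prox_objective x u" if "u \<in> D" for u
  proof -
    have "0 \<le> (norm (u - x) - c)\<^sup>2 / 2"
      by simp
    then have "- c\<^sup>2 / 2 \<le> - c * norm (u - x) + 1/2 * (norm (u - x))\<^sup>2"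
      by (simp add: power2_diff algebra_simps)
    then show ?thesis
      using coercive[OF that] by linarith
  qed
  then show ?thesis
    by (intro bdd_belowI2) auto
qed

lemma prox_objective_sublevel_bounded: "bounded {u \<in> D. prox_objective x u \<le> b}"
proof -
  obtain c K where c: "c \<ge> 0"
    and coercive: "\<And>u. u \<in> D \<Longrightarrow> K - c * norm (u - x) + 1/2 * (norm (u - x))\<^sup>2 \<le> prox_objective x u"
    using prox_objective_coercive[where x = x] by metis
  define Q where "Q = \<bar>b - K\<bar>"
  have Q: "Q \<ge> 0"
    unfolding Q_def by simp
  have "{u \<in> D. prox_objective x u \<le> b} \<subseteq> cball x (2 * c + 2 * Q + 1)"
  proof
    fix u assume u: "u \<in> {u \<in> D. prox_objective x u \<le> b}"
    define n where "n = norm (u - x)"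
    have bound: "1/2 * n\<^sup>2 - c * n \<le> Q"
      using coercive[of u] u unfolding n_def Q_def by auto
    have "n \<le> 2 * c + 2 * Q + 1"
    proof (rule ccontr)
      assume "\<not> ?thesis"
      then have "1 \<le> n" "Q + 1/2 \<le> n / 2 - c"
        using c Q by linarith+
      then have "1 * (Q + 1/2) \<le> n * (n / 2 - c)"
        using Q by (intro mult_mono) simp_all
      also have "\<dots> = 1/2 * n\<^sup>2 - c * n"
        by (simp add: power2_eq_square algebra_simps)
      finally show False
        using bound by simp
    qed
    then show "u \<in> cball x (2 * c + 2 * Q + 1)"
      unfolding n_def by (simp add: dist_norm norm_minus_commute)
  qed
  then show ?thesis
    using bounded_cball bounded_subset by blast
qed

lemma prox_objective_has_minimizer: "\<exists>p\<in>D. \<forall>u\<in>D. prox_objective x p \<le> prox_objective x u"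
proof -
  define m where "m = Inf (prox_objective x ` D)"
  define F where "F k = {u \<in> D. prox_objective x u \<le> m + 1 / (real k + 1)}" for k :: nat
  have "compact (F k)" for k
    unfolding F_def compact_eq_bounded_closed
    using prox_objective_sublevel_bounded prox_objective_sublevel_closed by blast
  moreover have "F k \<noteq> {}" for k
  proof -
    have "m < m + 1 / (real k + 1)"
      by simp
    then obtain v where "v \<in> prox_objective x ` D" "v < m + 1 / (real k + 1)"
      unfolding m_def using cInf_lessD[of "prox_objective x ` D"] domain_nonempty by blast
    then obtain u where "u \<in> D" "prox_objective x u < m + 1 / (real k + 1)"
      by blast
    then have "u \<in> F k"
      unfolding F_def by simp
    then show ?thesis
      by blast
  qed
  moreover have "F j \<subseteq> F i" if "i \<le> j" for i j
  proof -
    have "1 / (real j + 1) \<le> 1 / (real i + 1)"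
      using that by (intro divide_left_mono) auto
    then show ?thesis
      unfolding F_def by auto
  qed
  ultimately have "\<Inter> (range F) \<noteq> {}"
    by (rule compact_nest)
  then obtain p where p: "\<And>k. p \<in> F k"
    by blast
  have "prox_objective x p \<le> m"
  proof (rule field_le_epsilon)
    fix e :: real assume "0 < e"
    then obtain k :: nat where k: "0 < k" "inverse (real k) < e"
      using ex_inverse_of_nat_less by blast
    have "1 / (real k + 1) \<le> inverse (real k)"
      using k by (simp add: field_simps)
    with p[of k] k show "prox_objective x p \<le> m + e"
      unfolding F_def by simp
  qed
  moreover have "m \<le> prox_objective x u" if "u \<in> D" for u
    unfolding m_def using prox_objective_bdd_below that by (simp add: cInf_lower)
  moreover have "p \<in> D"
    using p[of 0] unfolding F_def by simp
  ultimately show ?thesis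
    by (meson order_trans)
qed

lemma minimizer_iff_variational_inequality:
  assumes p: "p \<in> D"
  shows "(\<forall>u\<in>D. prox_objective x p \<le> prox_objective x u) \<longleftrightarrow> (\<forall>u\<in>D. \<gamma> p + (x - p) \<bullet> (u - p) \<le> \<gamma> u)"
proof
  assume min: "\<forall>u\<in>D. prox_objective x p \<le> prox_objective x u"
  show "\<forall>u\<in>D. \<gamma> p + (x - p) \<bullet> (u - p) \<le> \<gamma> u"
  proof
    fix u assume u: "u \<in> D"
    define B where "B = (x - p) \<bullet> (u - p)"
    define N where "N = (norm (u - p))\<^sup>2"
    \<comment> \<open>Compare p with the points of the segment towards u; the quadratic term is of second order.\<close>
    have "\<gamma> p - \<gamma> u + B \<le> 0"
    proof (rule lowerbound_at_right_0[where q = "\<lambda>\<theta>. \<theta> / 2 * N"])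
      show "((\<lambda>\<theta>. \<theta> / 2 * N) \<longlongrightarrow> 0) (at_right 0)"
        by (auto intro!: tendsto_eq_intros)
    next
      fix \<theta> :: real assume \<theta>: "0 < \<theta>" "\<theta> \<le> 1"
      define w where "w = (1 - \<theta>) *\<^sub>R p + \<theta> *\<^sub>R u"
      have "prox_objective x p \<le> prox_objective x w"
        using min convex_combination(1)[OF p u] \<theta> unfolding w_def by simp
      moreover have "\<gamma> w \<le> (1 - \<theta>) * \<gamma> p + \<theta> * \<gamma> u"
        unfolding w_def using convex_combination(2)[OF p u] \<theta> by simp
      moreover have "(norm (w - x))\<^sup>2 = (norm (p - x))\<^sup>2 - 2 * (\<theta> * B) + \<theta>\<^sup>2 * N"
      proof -
        have "w - x = (p - x) - (- \<theta>) *\<^sub>R (u - p)"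
          unfolding w_def by (simp add: algebra_simps)
        then have "(norm (w - x))\<^sup>2 = (norm (p - x))\<^sup>2 - 2 * (- \<theta>) * ((u - p) \<bullet> (p - x)) + (- \<theta>)\<^sup>2 * N"
          unfolding N_def by (simp only: norm_diff_scaleR_squared)
        moreover have "(u - p) \<bullet> (p - x) = - B"
          unfolding B_def by (metis inner_commute inner_minus_right minus_diff_eq)
        ultimately show ?thesis
          by simp
      qed
      ultimately have "\<theta> * (\<gamma> p - \<gamma> u + B) \<le> \<theta> * (\<theta> / 2 * N)"
        unfolding prox_objective_def by (simp add: algebra_simps power2_eq_square)
      then show "\<gamma> p - \<gamma> u + B \<le> \<theta> / 2 * N"
        using \<theta> by simp
    qed
    then show "\<gamma> p + (x - p) \<bullet> (u - p) \<le> \<gamma> u"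
      unfolding B_def by simp
  qed
next
  assume vi: "\<forall>u\<in>D. \<gamma> p + (x - p) \<bullet> (u - p) \<le> \<gamma> u"
  show "\<forall>u\<in>D. prox_objective x p \<le> prox_objective x u"
  proof
    fix u assume u: "u \<in> D"
    have "(norm (u - x))\<^sup>2 = (norm (u - p))\<^sup>2 - 2 * 1 * ((x - p) \<bullet> (u - p)) + 1\<^sup>2 * (norm (x - p))\<^sup>2"
      using norm_diff_scaleR_squared[of "u - p" 1 "x - p"] by simp
    then have "(norm (p - x))\<^sup>2 - 2 * ((x - p) \<bullet> (u - p)) \<le> (norm (u - x))\<^sup>2"
      by (simp add: norm_minus_commute)
    then show "prox_objective x p \<le> prox_objective x u"
      using vi u unfolding prox_objective_def by fastforce
  qed
qed

lemma variational_inequality_nonexpansive: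
  assumes p: "\<And>u. u \<in> D \<Longrightarrow> \<gamma> p + (x - p) \<bullet> (u - p) \<le> \<gamma> u" and "p \<in> D"
    and q: "\<And>u. u \<in> D \<Longrightarrow> \<gamma> q + (y - q) \<bullet> (u - q) \<le> \<gamma> u" and "q \<in> D"
  shows "norm (p - q) \<le> norm (x - y)"
proof -
  have "\<gamma> p + (x - p) \<bullet> (q - p) \<le> \<gamma> q" and "\<gamma> q + (y - q) \<bullet> (p - q) \<le> \<gamma> p"
    using p[of q] q[of p] assms by simp_all
  moreover have "(x - p) \<bullet> (q - p) + (y - q) \<bullet> (p - q) = (norm (p - q))\<^sup>2 - (x - y) \<bullet> (p - q)"
    by (simp add: power2_norm_eq_inner inner_diff_left inner_diff_right inner_commute algebra_simps)
  ultimately have "(norm (p - q))\<^sup>2 \<le> (x - y) \<bullet> (p - q)"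
    by linarith
  also have "\<dots> \<le> norm (x - y) * norm (p - q)"
    by (rule norm_cauchy_schwarz)
  finally show ?thesis
    by (cases "norm (p - q) = 0") (auto simp: power2_eq_square)
qed

end

lemma proper_fun_finite:
  assumes "proper_fun g" "g v \<noteq> \<infinity>"
  shows "g v = ereal (real_of_ereal (g v))"
  using assms unfolding proper_fun_def by (cases "g v") auto

lemma proper_fun_scaled_add:
  assumes "proper_fun g" "t > 0"
  shows "ereal t * g v + ereal c = (if g v = \<infinity> then \<infinity> else ereal (t * real_of_ereal (g v) + c))"
  using assms unfolding proper_fun_def by (cases "g v") auto

lemma ereal_convex_fun_on_domain:
  assumes proper: "proper_fun g" and convex: "ereal_convex_fun g" and t: "t \<ge> 0"
  shows "convex_on {v. g v \<noteq> \<infinity>} (\<lambda>v. t * real_of_ereal (g v))"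
proof -
  have combination: "g ((1 - \<theta>) *\<^sub>R x + \<theta> *\<^sub>R y) \<noteq> \<infinity> \<and>
      real_of_ereal (g ((1 - \<theta>) *\<^sub>R x + \<theta> *\<^sub>R y)) \<le> (1 - \<theta>) * real_of_ereal (g x) + \<theta> * real_of_ereal (g y)"
    if finite: "g x \<noteq> \<infinity>" "g y \<noteq> \<infinity>" and \<theta>: "0 \<le> \<theta>" "\<theta> \<le> 1" for x y and \<theta> :: real
  proof -
    obtain a b where a: "g x = ereal a" and b: "g y = ereal b"
      using finite proper_fun_finite[OF proper] by metis
    have "g ((1 - \<theta>) *\<^sub>R x + \<theta> *\<^sub>R y) \<le> ereal (1 - \<theta>) * g x + ereal \<theta> * g y"
      using convex \<theta> unfolding ereal_convex_fun_def by blast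
    then have "g ((1 - \<theta>) *\<^sub>R x + \<theta> *\<^sub>R y) \<le> ereal ((1 - \<theta>) * a + \<theta> * b)"
      by (simp add: a b)
    then show ?thesis
      using proper unfolding proper_fun_def a b
      by (cases "g ((1 - \<theta>) *\<^sub>R x + \<theta> *\<^sub>R y)") auto
  qed
  show ?thesis
  proof (rule convex_onI)
    fix \<theta> :: real and x y assume "0 < \<theta>" "\<theta> < 1" "x \<in> {v. g v \<noteq> \<infinity>}" "y \<in> {v. g v \<noteq> \<infinity>}"
    then have "t * real_of_ereal (g ((1 - \<theta>) *\<^sub>R x + \<theta> *\<^sub>R y))
        \<le> t * ((1 - \<theta>) * real_of_ereal (g x) + \<theta> * real_of_ereal (g y))"
      using combination[of x y \<theta>] by (intro mult_left_mono[OF _ t]) simp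
    then show "t * real_of_ereal (g ((1 - \<theta>) *\<^sub>R x + \<theta> *\<^sub>R y))
        \<le> (1 - \<theta>) * (t * real_of_ereal (g x)) + \<theta> * (t * real_of_ereal (g y))"
      by (simp add: algebra_simps)
  next
    show "convex {v. g v \<noteq> \<infinity>}"
      using combination by (auto simp: convex_alt)
  qed
qed

lemma lsc_convex_function_ereal:
  fixes g :: "'a::euclidean_space \<Rightarrow> ereal"
  assumes proper: "proper_fun g" and lsc: "lsc_fun g" and convex: "ereal_convex_fun g" and t: "t > 0"
  shows "lsc_convex_function {v. g v \<noteq> \<infinity>} (\<lambda>v. t * real_of_ereal (g v))"
proof
  show "{v. g v \<noteq> \<infinity>} \<noteq> {}"
    using proper unfolding proper_fun_def by auto
  show "convex_on {v. g v \<noteq> \<infinity>} (\<lambda>v. t * real_of_ereal (g v))"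
    using t by (intro ereal_convex_fun_on_domain[OF proper convex]) simp
  fix c :: real
  have "{v \<in> {v. g v \<noteq> \<infinity>}. t * real_of_ereal (g v) \<le> c} = {v. g v \<le> ereal (c / t)}"
  proof (intro set_eqI iffI)
    fix v assume "v \<in> {v \<in> {v. g v \<noteq> \<infinity>}. t * real_of_ereal (g v) \<le> c}"
    then show "v \<in> {v. g v \<le> ereal (c / t)}"
      using proper t unfolding proper_fun_def by (cases "g v") (auto simp: pos_le_divide_eq mult.commute)
  next
    fix v assume "v \<in> {v. g v \<le> ereal (c / t)}"
    then show "v \<in> {v \<in> {v. g v \<noteq> \<infinity>}. t * real_of_ereal (g v) \<le> c}"
      using proper t unfolding proper_fun_def by (cases "g v") (auto simp: pos_le_divide_eq mult.commute)
  qed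
  then show "closed {v \<in> {v. g v \<noteq> \<infinity>}. t * real_of_ereal (g v) \<le> c}"
    using lsc unfolding lsc_fun_def by simp
qed

context
  fixes g :: "'a::euclidean_space \<Rightarrow> ereal" and t :: real
  assumes proper: "proper_fun g" and lsc: "lsc_fun g" and convex: "ereal_convex_fun g" and t: "t > 0"
begin

interpretation scaled: lsc_convex_function "{v. g v \<noteq> \<infinity>}" "\<lambda>v. t * real_of_ereal (g v)"
  by (rule lsc_convex_function_ereal[OF proper lsc convex t])

lemma prox_minimizer_iff:
  "(\<forall>u. ereal t * g p + ereal (1/2 * (norm (p - x))\<^sup>2) \<le> ereal t * g u + ereal (1/2 * (norm (u - x))\<^sup>2))
    \<longleftrightarrow> g p \<noteq> \<infinity> \<and> (\<forall>u\<in>{v. g v \<noteq> \<infinity>}. scaled.prox_objective x p \<le> scaled.prox_objective x u)"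
  using proper unfolding proper_fun_scaled_add[OF proper t] scaled.prox_objective_def proper_fun_def
  by (auto split: if_splits)

lemma prox_variational_inequality:
  fixes x :: 'a
  defines "p \<equiv> prox (\<lambda>v. ereal t * g v) x"
  shows "g p \<noteq> \<infinity>"
    and "\<And>u. g u \<noteq> \<infinity> \<Longrightarrow> t * real_of_ereal (g p) + (x - p) \<bullet> (u - p) \<le> t * real_of_ereal (g u)"
proof -
  \<comment> \<open>prox is defined by SOME, so a minimizer has to be exhibited first.\<close>
  obtain q where "q \<in> {v. g v \<noteq> \<infinity>}"
    and "\<forall>u\<in>{v. g v \<noteq> \<infinity>}. scaled.prox_objective x q \<le> scaled.prox_objective x u"
    using scaled.prox_objective_has_minimizer by blast
  then have "\<forall>u. ereal t * g q + ereal (1/2 * (norm (q - x))\<^sup>2) \<le> ereal t * g u + ereal (1/2 * (norm (u - x))\<^sup>2)"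
    using prox_minimizer_iff by blast
  then have "\<forall>u. ereal t * g p + ereal (1/2 * (norm (p - x))\<^sup>2) \<le> ereal t * g u + ereal (1/2 * (norm (u - x))\<^sup>2)"
    unfolding p_def prox_def by (rule someI)
  then have "g p \<noteq> \<infinity>"
    and "\<forall>u\<in>{v. g v \<noteq> \<infinity>}. scaled.prox_objective x p \<le> scaled.prox_objective x u"
    using prox_minimizer_iff by blast+
  then show "g p \<noteq> \<infinity>"
    and "\<And>u. g u \<noteq> \<infinity> \<Longrightarrow> t * real_of_ereal (g p) + (x - p) \<bullet> (u - p) \<le> t * real_of_ereal (g u)"
    using scaled.minimizer_iff_variational_inequality[of p x] by auto
qed

lemma prox_nonexpansive:
  "norm (prox (\<lambda>v. ereal t * g v) x - prox (\<lambda>v. ereal t * g v) y) \<le> norm (x - y)"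
  using prox_variational_inequality[where x = x] prox_variational_inequality[where x = y]
  by (intro scaled.variational_inequality_nonexpansive) auto

lemma prox_eqI:
  assumes "g p \<noteq> \<infinity>"
    and "\<And>u. g u \<noteq> \<infinity> \<Longrightarrow> t * real_of_ereal (g p) + (x - p) \<bullet> (u - p) \<le> t * real_of_ereal (g u)"
  shows "prox (\<lambda>v. ereal t * g v) x = p"
proof -
  have "norm (prox (\<lambda>v. ereal t * g v) x - p) \<le> norm (x - x)"
    using prox_variational_inequality[where x = x] assms
    by (intro scaled.variational_inequality_nonexpansive) auto
  then show ?thesis
    by simp
qed

end

lemma ereal_sum_minimizer_optimality:
  fixes f :: "'a::real_inner \<Rightarrow> real" and g :: "'a \<Rightarrow> ereal"
  assumes proper: "proper_fun g" and convex: "ereal_convex_fun g"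
    and deriv: "(f has_derivative (\<lambda>h. G \<bullet> h)) (at p)"
    and min: "\<And>y. ereal (f p) + g p \<le> ereal (f y) + g y"
  shows "g p \<noteq> \<infinity>"
    and "\<And>u. g u \<noteq> \<infinity> \<Longrightarrow> real_of_ereal (g p) - real_of_ereal (g u) \<le> G \<bullet> (u - p)"
proof -
  have sum: "ereal (f y) + g y = (if g y = \<infinity> then \<infinity> else ereal (f y + real_of_ereal (g y)))" for y
    using proper_fun_scaled_add[OF proper, of 1 y "f y"] by (simp add: add.commute)
  obtain u0 where "g u0 \<noteq> \<infinity>"
    using proper unfolding proper_fun_def by blast
  then show finite: "g p \<noteq> \<infinity>"
    using min[of u0] unfolding sum by (auto split: if_splits)
  have real_min: "f p + real_of_ereal (g p) \<le> f y + real_of_ereal (g y)" if "g y \<noteq> \<infinity>" for y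
    using min[of y] finite that unfolding sum by simp
  have domain_convex: "convex_on {v. g v \<noteq> \<infinity>} (\<lambda>v. 1 * real_of_ereal (g v))"
    by (rule ereal_convex_fun_on_domain[OF proper convex]) simp
  fix u assume u: "g u \<noteq> \<infinity>"
  show "real_of_ereal (g p) - real_of_ereal (g u) \<le> G \<bullet> (u - p)"
  proof (rule lowerbound_at_right_0[OF _ directional_derivative_at_right[OF deriv]])
    fix \<theta> :: real assume \<theta>: "0 < \<theta>" "\<theta> \<le> 1"
    have w: "(1 - \<theta>) *\<^sub>R p + \<theta> *\<^sub>R u = p + \<theta> *\<^sub>R (u - p)"
      by (simp add: algebra_simps)
    have "p + \<theta> *\<^sub>R (u - p) \<in> {v. g v \<noteq> \<infinity>}"
      using convexD[OF convex_on_imp_convex[OF domain_convex], of p u "1 - \<theta>" \<theta>] finite u \<theta>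
      by (simp add: w)
    then have "f p + real_of_ereal (g p) \<le> f (p + \<theta> *\<^sub>R (u - p)) + real_of_ereal (g (p + \<theta> *\<^sub>R (u - p)))"
      by (intro real_min) simp
    moreover have "real_of_ereal (g (p + \<theta> *\<^sub>R (u - p))) \<le> (1 - \<theta>) * real_of_ereal (g p) + \<theta> * real_of_ereal (g u)"
      using convex_onD[OF domain_convex, of \<theta> p u] finite u \<theta> by (simp add: w)
    ultimately have "\<theta> * (real_of_ereal (g p) - real_of_ereal (g u)) \<le> f (p + \<theta> *\<^sub>R (u - p)) - f p"
      by (simp add: algebra_simps)
    then show "real_of_ereal (g p) - real_of_ereal (g u) \<le> (f (p + \<theta> *\<^sub>R (u - p)) - f p) / \<theta>"
      using \<theta> by (simp add: le_divide_eq mult.commute)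
  qed
qed

lemma forward_backward_nonexpansive:
  fixes f :: "'a::euclidean_space \<Rightarrow> real" and g :: "'a \<Rightarrow> ereal"
  assumes f: "convex_on UNIV f" "\<And>y. (f has_derivative (\<lambda>h. G y \<bullet> h)) (at y)" "lipschitz_on L UNIV G"
    and g: "proper_fun g" "lsc_fun g" "ereal_convex_fun g"
    and t: "0 < t" "t * L \<le> 1"
  shows "norm (prox (\<lambda>v. ereal t * g v) (x - t *\<^sub>R G x) - prox (\<lambda>v. ereal t * g v) (y - t *\<^sub>R G y))
    \<le> norm (x - y)"
  using prox_nonexpansive[OF g t(1)] gradient_step_nonexpansive[OF f t] by (rule order_trans)

lemma forward_backward_fixed_point:
  fixes f :: "'a::euclidean_space \<Rightarrow> real" and g :: "'a \<Rightarrow> ereal"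
  assumes proper: "proper_fun g" and lsc: "lsc_fun g" and convex: "ereal_convex_fun g"
    and deriv: "(f has_derivative (\<lambda>h. G \<bullet> h)) (at p)"
    and min: "\<And>y. ereal (f p) + g p \<le> ereal (f y) + g y"
    and t: "0 < t"
  shows "prox (\<lambda>v. ereal t * g v) (p - t *\<^sub>R G) = p"
proof (rule prox_eqI[OF proper lsc convex t])
  show "g p \<noteq> \<infinity>"
    by (rule ereal_sum_minimizer_optimality(1)[OF proper convex deriv min])
  fix u assume "g u \<noteq> \<infinity>"
  then have "t * (real_of_ereal (g p) - real_of_ereal (g u)) \<le> t * (G \<bullet> (u - p))"
    using ereal_sum_minimizer_optimality(2)[OF proper convex deriv min] t by (intro mult_left_mono) auto
  then show "t * real_of_ereal (g p) + (p - t *\<^sub>R G - p) \<bullet> (u - p) \<le> t * real_of_ereal (g u)"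
    by (simp add: algebra_simps)
qed

section \<open>Averaged iterations\<close>

lemma ereal_divide_less_imp_le:
  fixes s a B :: real
  assumes "ereal s / ereal a < ereal B" and "0 \<le> s" and "0 \<le> a"
  shows "s \<le> max B 0 * a"
proof (cases "a = 0")
  case True
  \<comment> \<open>In ereal, s / 0 is \<infinity> for s > 0, so the hypothesis forces s = 0.\<close>
  then have "s = 0"
    using assms by (cases "s = 0") (auto simp: divide_ereal_def)
  then show ?thesis
    using True by simp
next
  case False
  then have "s / a < B"
    using assms by simp
  then have "s < B * a"
    using False assms by (simp add: divide_less_eq)
  also have "\<dots> \<le> max B 0 * a"
    using assms by (intro mult_right_mono) auto
  finally show ?thesis
    by simp
qed

lemma limsup_ratio_finite_imp_eventually_le:
  fixes s a :: "nat \<Rightarrow> real"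
  assumes "limsup (\<lambda>k. ereal (s k) / ereal (a k)) < \<infinity>" and "\<And>k. 0 \<le> s k" and "\<And>k. 0 \<le> a k"
  obtains B where "eventually (\<lambda>k. s k \<le> B * a k) sequentially"
proof -
  obtain n :: nat where "limsup (\<lambda>k. ereal (s k) / ereal (a k)) < ereal (real n)"
    using assms(1) less_PInf_Ex_of_nat by auto
  then have "eventually (\<lambda>k. ereal (s k) / ereal (a k) < ereal (real n)) sequentially"
    by (rule Limsup_lessD)
  then have "eventually (\<lambda>k. s k \<le> max (real n) 0 * a k) sequentially"
    by eventually_elim (use ereal_divide_less_imp_le assms(2,3) in blast)
  then show thesis
    by (rule that)
qed

lemma averaged_step_distance:
  fixes T :: "nat \<Rightarrow> 'a::real_normed_vector \<Rightarrow> 'a" and \<alpha> :: "nat \<Rightarrow> real"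
  assumes contraction: "\<And>y z. norm (T 0 y - T 0 z) \<le> r * norm (y - z)"
    and nonexpansive: "\<And>i y z. 1 \<le> i \<Longrightarrow> i \<le> N \<Longrightarrow> norm (T i y - T i z) \<le> norm (y - z)"
    and fixed: "1 \<le> N \<Longrightarrow> T 1 p = p"
    and offset: "\<And>i. 2 \<le> i \<Longrightarrow> i \<le> N \<Longrightarrow> norm (T i p - p) \<le> C"
    and nonneg: "\<And>i. i \<le> N \<Longrightarrow> 0 \<le> \<alpha> i" and sum: "(\<Sum>i\<le>N. \<alpha> i) = 1"
  shows "norm ((\<Sum>i\<le>N. \<alpha> i *\<^sub>R T i y) - p)
    \<le> (1 - \<alpha> 0 * (1 - r)) * norm (y - p) + \<alpha> 0 * norm (T 0 p - p) + C * (\<Sum>i\<in>{2..N}. \<alpha> i)"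
proof -
  define d where "d = norm (y - p)"
  define b where "b i = (if i = 0 then r * d + norm (T 0 p - p) else d + (if 2 \<le> i then C else 0))" for i :: nat
  have bound: "norm (T i y - p) \<le> b i" if "i \<le> N" for i
  proof -
    consider "i = 0" | "i = 1" | "2 \<le> i"
      by linarith
    then show ?thesis
    proof cases
      case 1
      have "norm (T 0 y - p) \<le> norm (T 0 y - T 0 p) + norm (T 0 p - p)"
        using norm_triangle_ineq[of "T 0 y - T 0 p" "T 0 p - p"] by simp
      with contraction[of y p] show ?thesis
        unfolding b_def d_def 1 by simp
    next
      case 2
      then show ?thesis
        using nonexpansive[of 1 y p] fixed that unfolding b_def d_def by simp
    next
      case 3
      have "norm (T i y - p) \<le> norm (T i y - T i p) + norm (T i p - p)"
        using norm_triangle_ineq[of "T i y - T i p" "T i p - p"] by simp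
      with nonexpansive[of i y p] offset[of i] 3 that show ?thesis
        unfolding b_def d_def by simp
    qed
  qed
  have "(\<Sum>i\<le>N. \<alpha> i *\<^sub>R T i y) - p = (\<Sum>i\<le>N. \<alpha> i *\<^sub>R T i y) - (\<Sum>i\<le>N. \<alpha> i) *\<^sub>R p"
    by (simp add: sum)
  also have "\<dots> = (\<Sum>i\<le>N. \<alpha> i *\<^sub>R (T i y - p))"
    by (simp add: scaleR_sum_left sum_subtractf scaleR_diff_right)
  finally have "norm ((\<Sum>i\<le>N. \<alpha> i *\<^sub>R T i y) - p) \<le> (\<Sum>i\<le>N. \<alpha> i * b i)"
    using norm_sum[of "\<lambda>i. \<alpha> i *\<^sub>R (T i y - p)" "{..N}"] bound nonneg
      sum_mono[of "{..N}" "\<lambda>i. norm (\<alpha> i *\<^sub>R (T i y - p))" "\<lambda>i. \<alpha> i * b i"]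
    by (simp add: mult_left_mono)
  also have "(\<Sum>i\<le>N. \<alpha> i * b i) = \<alpha> 0 * b 0 + (\<Sum>i\<in>{1..N}. \<alpha> i * b i)"
    by (simp add: atMost_atLeast0 sum.atLeast_Suc_atMost)
  also have "(\<Sum>i\<in>{1..N}. \<alpha> i * b i) = d * (\<Sum>i\<in>{1..N}. \<alpha> i) + C * (\<Sum>i\<in>{2..N}. \<alpha> i)"
  proof -
    have "(\<Sum>i\<in>{1..N}. \<alpha> i * b i) = (\<Sum>i\<in>{1..N}. d * \<alpha> i) + (\<Sum>i\<in>{1..N}. if 2 \<le> i then C * \<alpha> i else 0)"
      unfolding b_def by (auto simp: algebra_simps sum.distrib[symmetric] intro!: sum.cong)
    also have "(\<Sum>i\<in>{1..N}. if 2 \<le> i then C * \<alpha> i else 0) = (\<Sum>i\<in>{2..N}. C * \<alpha> i)"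
      by (simp add: sum.If_cases) (rule sum.cong; auto)
    finally show ?thesis
      by (simp add: sum_distrib_left)
  qed
  also have "(\<Sum>i\<in>{1..N}. \<alpha> i) = 1 - \<alpha> 0"
    using sum by (simp add: atMost_atLeast0 sum.atLeast_Suc_atMost)
  finally show ?thesis
    unfolding b_def d_def by (simp add: algebra_simps)
qed

lemma convex_combination_le_max:
  fixes a b l c :: real
  assumes "c \<le> (1 - l) * a + l * b" and "0 \<le> l" and "l \<le> 1"
  shows "c \<le> max a b"
proof -
  have "(1 - l) * a + l * b \<le> (1 - l) * max a b + l * max a b"
    using assms by (intro add_mono mult_left_mono) auto
  with assms(1) show ?thesis
    by (simp add: algebra_simps)
qed

lemma eventually_le_max_imp_le:
  fixes d :: "nat \<Rightarrow> real"
  assumes "\<And>k. K \<le> k \<Longrightarrow> d (Suc k) \<le> max (d k) R"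
  shows "d k \<le> max (Max (d ` {..K})) R"
proof (induction k)
  case 0
  show ?case
    by (rule max.coboundedI1) (rule Max_ge, auto)
next
  case (Suc k)
  show ?case
  proof (cases "Suc k \<le> K")
    case True
    then show ?thesis
      by (intro max.coboundedI1 Max_ge) auto
  next
    case False
    then have "d (Suc k) \<le> max (d k) R"
      by (intro assms) simp
    with Suc.IH show ?thesis
      by linarith
  qed
qed

lemma averaged_iteration_bounded:
  fixes T :: "nat \<Rightarrow> 'a::real_normed_vector \<Rightarrow> 'a" and \<alpha> :: "nat \<Rightarrow> nat \<Rightarrow> real"
  assumes contraction: "\<And>y z. norm (T 0 y - T 0 z) \<le> r * norm (y - z)" and r: "0 \<le> r" "r < 1"
    and nonexpansive: "\<And>i y z. 1 \<le> i \<Longrightarrow> i \<le> N \<Longrightarrow> norm (T i y - T i z) \<le> norm (y - z)"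
    and fixed: "1 \<le> N \<Longrightarrow> T 1 p = p"
    and nonneg: "\<And>k i. i \<le> N \<Longrightarrow> 0 \<le> \<alpha> k i" and sum: "\<And>k. (\<Sum>i\<le>N. \<alpha> k i) = 1"
    and dominated: "eventually (\<lambda>k. (\<Sum>i\<in>{2..N}. \<alpha> k i) \<le> B * \<alpha> k 0) sequentially"
    and iter: "\<And>k. x (Suc k) = (\<Sum>i\<le>N. \<alpha> k i *\<^sub>R T i (x k))"
  shows "bounded (range x)"
proof -
  define C where "C = (\<Sum>i\<le>N. norm (T i p - p))"
  define R where "R = (norm (T 0 p - p) + C * B) / (1 - r)"
  obtain K where K: "\<And>k. K \<le> k \<Longrightarrow> (\<Sum>i\<in>{2..N}. \<alpha> k i) \<le> B * \<alpha> k 0"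
    using dominated unfolding eventually_sequentially by blast
  \<comment> \<open>Once the weights of T 2, ..., T N are dominated by the weight of the contraction,
    each step is a convex combination of the current distance to p and the constant R.\<close>
  have "norm (x (Suc k) - p) \<le> max (norm (x k - p)) R" if "K \<le> k" for k
  proof (rule convex_combination_le_max)
    have "C \<ge> 0"
      unfolding C_def by (simp add: sum_nonneg)
    have "norm (x (Suc k) - p) \<le> (1 - \<alpha> k 0 * (1 - r)) * norm (x k - p) + \<alpha> k 0 * norm (T 0 p - p)
        + C * (\<Sum>i\<in>{2..N}. \<alpha> k i)"
      unfolding iter C_def
      by (rule averaged_step_distance[OF contraction nonexpansive fixed _ nonneg sum]) (auto intro: member_le_sum)
    also have "\<dots> \<le> (1 - \<alpha> k 0 * (1 - r)) * norm (x k - p) + \<alpha> k 0 * norm (T 0 p - p) + C * (B * \<alpha> k 0)"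
      using K[OF that] \<open>C \<ge> 0\<close> by (simp add: mult_left_mono)
    also have "\<dots> = (1 - \<alpha> k 0 * (1 - r)) * norm (x k - p) + \<alpha> k 0 * (1 - r) * R"
      unfolding R_def using r by (simp add: field_simps)
    finally show "norm (x (Suc k) - p) \<le> (1 - \<alpha> k 0 * (1 - r)) * norm (x k - p) + \<alpha> k 0 * (1 - r) * R" .
    have "\<alpha> k 0 \<le> 1"
      using member_le_sum[of 0 "{..N}" "\<alpha> k"] nonneg sum by simp
    then show "0 \<le> \<alpha> k 0 * (1 - r)" "\<alpha> k 0 * (1 - r) \<le> 1"
      using nonneg[of 0 k] r by (simp_all add: mult_le_one)
  qed
  then have "norm (x k - p) \<le> max (Max ((\<lambda>k. norm (x k - p)) ` {..K})) R" for k
    by (rule eventually_le_max_imp_le)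
  then have "range x \<subseteq> cball p (max (Max ((\<lambda>k. norm (x k - p)) ` {..K})) R)"
    by (auto simp: dist_norm norm_minus_commute)
  then show ?thesis
    using bounded_cball bounded_subset by blast
qed

theorem mainTheorem17:
  fixes N :: nat
    and f :: "nat \<Rightarrow> 'a::euclidean_space \<Rightarrow> real"
    and gf :: "nat \<Rightarrow> 'a \<Rightarrow> 'a"
    and Lf :: "nat \<Rightarrow> real"
    and g :: "nat \<Rightarrow> 'a \<Rightarrow> ereal"
    and \<omega> :: "'a \<Rightarrow> real" and g\<omega> :: "'a \<Rightarrow> 'a"
    and \<mu> L\<omega> u :: real
    and t :: "nat \<Rightarrow> real"
    and \<alpha> :: "nat \<Rightarrow> nat \<Rightarrow> real"
    and x :: "nat \<Rightarrow> 'a"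
  assumes f_convex: "\<And>i. i \<le> N \<Longrightarrow> convex_on UNIV (f i)"
    and f_grad: "\<And>i y. i \<le> N \<Longrightarrow> (f i has_derivative (\<lambda>h. gf i y \<bullet> h)) (at y)"
    and f_lip: "\<And>i. i \<le> N \<Longrightarrow> lipschitz_on (Lf i) UNIV (gf i)"
    and g_proper: "\<And>i. i \<le> N \<Longrightarrow> proper_fun (g i)"
    and g_lsc: "\<And>i. i \<le> N \<Longrightarrow> lsc_fun (g i)"
    and g_convex: "\<And>i. i \<le> N \<Longrightarrow> ereal_convex_fun (g i)"
    and mu_pos: "\<mu> > 0"
    and omega_strong: "convex_on UNIV (\<lambda>y. \<omega> y - \<mu> / 2 * (norm y)\<^sup>2)"
    and omega_grad: "\<And>y. (\<omega> has_derivative (\<lambda>h. g\<omega> y \<bullet> h)) (at y)"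
    and omega_lip: "lipschitz_on L\<omega> UNIV g\<omega>"
    and u_range: "0 < u" "u \<le> 2 / (L\<omega> + \<mu>)"
    and t_range: "\<And>i. i < N \<Longrightarrow> 0 < t i \<and> t i * Lf i \<le> 1"
    and X1_nonempty: "Xstar f g 1 \<noteq> {}"
    and P1: "\<And>k. (\<forall>i\<le>N. 0 \<le> \<alpha> k i) \<and> \<alpha> k 0 < 1 \<and> (\<Sum>i\<le>N. \<alpha> k i) = 1"
    and P2_lim: "(\<lambda>k. \<alpha> k 0) \<longlonglongrightarrow> 0"
    and P2_div: "\<not> summable (\<lambda>k. \<alpha> k 0)"
    and P2_delta: "limsup (\<lambda>k. ereal (\<Sum>i\<in>{2..N}. \<alpha> k i) / ereal (\<alpha> k 0)) < \<infinity>"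
    and iter: "\<And>k. x (Suc k) = (\<Sum>i\<le>N. \<alpha> k i *\<^sub>R Top g\<omega> u gf g t i (x k))"
  shows "bounded (range x)"
proof -
  obtain p where p: "p \<in> Xstar f g 1"
    using X1_nonempty by blast
  define T where "T = Top g\<omega> u gf g t"
  define r where "r = sqrt (1 - 2 * u * \<mu> * L\<omega> / (\<mu> + L\<omega>))"
  have r: "0 \<le> r" "r < 1" and contraction: "\<And>y z. norm (T 0 y - T 0 z) \<le> r * norm (y - z)"
    unfolding r_def T_def Top_def
    using strongly_convex_gradient_step_contraction[OF mu_pos omega_strong omega_grad omega_lip u_range] by auto
  have nonexpansive: "norm (T i y - T i z) \<le> norm (y - z)" if i: "1 \<le> i" "i \<le> N" for i y z
  proof -
    obtain j where j: "i = Suc j" "j < N"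
      using i by (cases i) auto
    show ?thesis
      unfolding T_def Top_def j using j(2) t_range[of j]
      by (auto intro!: forward_backward_nonexpansive[OF f_convex[of j] f_grad[of j] f_lip[of j]]
          g_proper g_lsc g_convex)
  qed
  have fixed: "T 1 p = p" if "1 \<le> N"
    unfolding T_def Top_def using p that t_range[of 0]
    by (auto simp: phi_def intro!: forward_backward_fixed_point g_proper g_lsc g_convex f_grad)
  obtain B where "eventually (\<lambda>k. (\<Sum>i\<in>{2..N}. \<alpha> k i) \<le> B * \<alpha> k 0) sequentially"
    by (rule limsup_ratio_finite_imp_eventually_le[OF P2_delta]) (use P1 in \<open>auto intro: sum_nonneg\<close>)
  then show ?thesis
    using contraction r nonexpansive fixed P1 iter unfolding T_def
    by (intro averaged_iteration_bounded[where p = p]) auto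
qed

end
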